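(* Let $S$ be a monoid with $1\in E\subseteq E(S)$, and let $\cdot:S\times E\to E$ be a function. Then $S$ is a modal left $E$-monoid with left $E$-modal operation $\cdot$ if and only if $E$ is right pre-reduced and for all $e\in E$ and $s,t\in S$: (M1) $e\cdot e=1$; (M2) $s\cdot 1=1$; (M3) $(s\cdot e)s=(s\cdot e)se$; (M4) $(st)\cdot e=s\cdot(t\cdot e)$. Furthermore, $S$ is an inductive left $E$-monoid with associated operation $\cdot$ if and only if (M1)–(M4) hold, $(E,\le_r)$ is a meet-semilattice, and (M5) $s\cdot(e\wedge f)=(s\cdot e)\wedge(s\cdot f)$ for all $s\in S$, $e,f\in E$, where $\wedge$ is the meet in $(E,\le_r)$.
   Context: For a semigroup $S$, $E(S)$ is its set of idempotents; for $e,f\in E(S)$, $e\le_r f$ iff $e=ef$. $E\subseteq E(S)$ is right pre-reduced if $e=ef$ and $f=fe$ imply $e=f$ for $e,f\in E$. Let $S$ be a monoid and $1\in E\subseteq E(S)$. $S$ is a modal left $E$-monoid if $E$ is right pre-reduced and (I1') for all $t\in S$, $e\in E$ there is $t\cdot e\in E$ such that for all $s\in S$: $ste=st$ iff $s(t\cdot e)=s$; the (necessarily unique) resulting map $(t,e)\mapsto t\cdot e$ is the left $E$-modal operation. $S$ is an inductive left $E$-monoid if it is a modal left $E$-monoid, $(E,\le_r)$ is a meet-semilattice with meet $\wedge$, and (I2') for $s\in S$, $e,f\in E$: $se=sf=s$ implies $s(e\wedge f)=s$. *)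

theory Defs
  imports Main
begin

text \<open>The monoid S is modelled as a type of class monoid_mult; E is a subset of it.
  The operation (t,e) maps to t . e is a function dot :: S => S => S, required to map S x E into E;
  its values outside S x E are irrelevant.\<close>

definition idempotents :: "'a::monoid_mult set" where
  "idempotents = {e. e * e = e}"

definition le_r :: "'a::monoid_mult \<Rightarrow> 'a \<Rightarrow> bool" where
  "le_r e f \<longleftrightarrow> e = e * f"

definition right_pre_reduced :: "'a::monoid_mult set \<Rightarrow> bool" where
  "right_pre_reduced E \<longleftrightarrow> (\<forall>e\<in>E. \<forall>f\<in>E. e = e * f \<and> f = f * e \<longrightarrow> e = f)"

definition modal_left_monoid :: "'a::monoid_mult set \<Rightarrow> ('a \<Rightarrow> 'a \<Rightarrow> 'a) \<Rightarrow> bool" where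
  "modal_left_monoid E dot \<longleftrightarrow>
     1 \<in> E \<and> E \<subseteq> idempotents \<and> right_pre_reduced E \<and>
     (\<forall>t. \<forall>e\<in>E. dot t e \<in> E \<and> (\<forall>s. s * t * e = s * t \<longleftrightarrow> s * dot t e = s))"

definition is_meet :: "'a::monoid_mult set \<Rightarrow> 'a \<Rightarrow> 'a \<Rightarrow> 'a \<Rightarrow> bool" where
  "is_meet E e f g \<longleftrightarrow> g \<in> E \<and> le_r g e \<and> le_r g f \<and>
     (\<forall>h\<in>E. le_r h e \<and> le_r h f \<longrightarrow> le_r h g)"

definition meet_semilattice :: "'a::monoid_mult set \<Rightarrow> bool" where
  "meet_semilattice E \<longleftrightarrow>
     (\<forall>e\<in>E. le_r e e) \<and>
     (\<forall>e\<in>E. \<forall>f\<in>E. \<forall>g\<in>E. le_r e f \<and> le_r f g \<longrightarrow> le_r e g) \<and>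
     (\<forall>e\<in>E. \<forall>f\<in>E. le_r e f \<and> le_r f e \<longrightarrow> e = f) \<and>
     (\<forall>e\<in>E. \<forall>f\<in>E. \<exists>g. is_meet E e f g)"

definition meet :: "'a::monoid_mult set \<Rightarrow> 'a \<Rightarrow> 'a \<Rightarrow> 'a" where
  "meet E e f = (THE g. is_meet E e f g)"

definition inductive_left_monoid :: "'a::monoid_mult set \<Rightarrow> ('a \<Rightarrow> 'a \<Rightarrow> 'a) \<Rightarrow> bool" where
  "inductive_left_monoid E dot \<longleftrightarrow>
     modal_left_monoid E dot \<and> meet_semilattice E \<and>
     (\<forall>s. \<forall>e\<in>E. \<forall>f\<in>E. s * e = s \<and> s * f = s \<longrightarrow> s * meet E e f = s)"

end

theory Submission
  imports Defs
begin

text \<open>Condition (I1') says that the right fixers of t \<cdot> e (the s with s (t \<cdot> e) = s) are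
  exactly the s with s t e = s t, and in a right pre-reduced set of idempotents an element is
  determined by its right fixers. Taking s = 1 gives (M1) and (M2), taking s = t \<cdot> e gives (M3),
  and comparing fixer sets gives (M4) and (M5). Conversely, by (M1), (M2) and (M4),
  s t e = s t forces s \<cdot> (t \<cdot> e) = 1, and (M3) then yields s (t \<cdot> e) = s. For inductive
  monoids, (I2') says that the fixers of the meet of e and f are the common fixers of e and f, which again
  follows from (M5) with s \<cdot> e = s \<cdot> f = 1.\<close>

definition modal_law :: "'a::monoid_mult set \<Rightarrow> ('a \<Rightarrow> 'a \<Rightarrow> 'a) \<Rightarrow> bool" where
  "modal_law E dot \<longleftrightarrow> (\<forall>t. \<forall>e\<in>E. \<forall>s. s * t * e = s * t \<longleftrightarrow> s * dot t e = s)"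

lemma modal_left_monoid_iff_modal_law:
  "modal_left_monoid E dot \<longleftrightarrow>
     1 \<in> E \<and> E \<subseteq> idempotents \<and> right_pre_reduced E \<and>
     (\<forall>t. \<forall>e\<in>E. dot t e \<in> E) \<and> modal_law E dot"
  unfolding modal_left_monoid_def modal_law_def by blast

lemma idempotentsD: "e \<in> idempotents \<Longrightarrow> e * e = e"
  unfolding idempotents_def by simp

lemma right_pre_reduced_eqI:
  assumes "right_pre_reduced E" "E \<subseteq> idempotents" "a \<in> E" "b \<in> E"
    and fixers: "\<And>x. x * a = x \<longleftrightarrow> x * b = x"
  shows "a = b"
proof -
  have "a * a = a" "b * b = b" using assms(2-4) idempotentsD by blast+
  then have "a = a * b" "b = b * a" using fixers[of a] fixers[of b] by auto
  then show ?thesis using assms(1,3,4) unfolding right_pre_reduced_def by blast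
qed

context
  fixes E :: "'a::monoid_mult set" and dot :: "'a \<Rightarrow> 'a \<Rightarrow> 'a"
  assumes law: "modal_law E dot"
begin

lemma modal_law_iff: "e \<in> E \<Longrightarrow> s * t * e = s * t \<longleftrightarrow> s * dot t e = s"
  using law unfolding modal_law_def by blast

lemma dot_eq_one_iff: "e \<in> E \<Longrightarrow> dot t e = 1 \<longleftrightarrow> t * e = t"
  using modal_law_iff[of e 1 t] by simp

lemma dot_self: "e \<in> E \<Longrightarrow> e * e = e \<Longrightarrow> dot e e = 1"
  by (simp add: dot_eq_one_iff)

lemma dot_one: "1 \<in> E \<Longrightarrow> dot t 1 = 1"
  by (simp add: dot_eq_one_iff)

lemma dot_absorb:
  assumes "e \<in> E" "dot t e * dot t e = dot t e"
  shows "dot t e * t = dot t e * t * e"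
  using modal_law_iff[OF assms(1), of "dot t e" t] assms(2) by simp

lemma dot_mult:
  assumes rpr: "right_pre_reduced E" and idem: "E \<subseteq> idempotents"
    and closed: "\<forall>t. \<forall>e\<in>E. dot t e \<in> E" and e: "e \<in> E"
  shows "dot (s * t) e = dot s (dot t e)"
proof (rule right_pre_reduced_eqI[OF rpr idem])
  have te: "dot t e \<in> E" using closed e by blast
  then show "dot (s * t) e \<in> E" "dot s (dot t e) \<in> E" using closed e by blast+
  fix x
  have "x * dot (s * t) e = x \<longleftrightarrow> (x * s) * t * e = (x * s) * t"
    using modal_law_iff[OF e, of x "s * t"] by (simp add: mult.assoc)
  also have "\<dots> \<longleftrightarrow> x * s * dot t e = x * s"
    using modal_law_iff[OF e] by simp
  also have "\<dots> \<longleftrightarrow> x * dot s (dot t e) = x"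
    using modal_law_iff[OF te] by simp
  finally show "x * dot (s * t) e = x \<longleftrightarrow> x * dot s (dot t e) = x" .
qed

end

lemma modal_law_if_M1_M4:
  fixes E :: "'a::monoid_mult set" and dot :: "'a \<Rightarrow> 'a \<Rightarrow> 'a"
  assumes closed: "\<forall>t. \<forall>e\<in>E. dot t e \<in> E"
    and M1: "\<forall>e\<in>E. dot e e = 1"
    and M2: "\<forall>s. dot s 1 = 1"
    and M3: "\<forall>e\<in>E. \<forall>s. dot s e * s = dot s e * s * e"
    and M4: "\<forall>e\<in>E. \<forall>s t. dot (s * t) e = dot s (dot t e)"
  shows "modal_law E dot"
  unfolding modal_law_def
proof (intro allI ballI iffI)
  fix t e s assume e: "e \<in> E" and fix_e: "s * t * e = s * t"
  have "dot s (dot t e) = dot (s * t * e) e"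
    using M4 e fix_e by simp
  also have "\<dots> = 1"
    using M1 M2 M4 e by (simp add: mult.assoc)
  finally show "s * dot t e = s"
    using M3 closed e by (metis mult_1_left)
next
  fix t e s assume e: "e \<in> E" and fix_te: "s * dot t e = s"
  have "s * t * e = s * (dot t e * t * e)"
    using fix_te by (metis mult.assoc)
  also have "\<dots> = s * t"
    using M3 e fix_te by (metis mult.assoc)
  finally show "s * t * e = s * t" .
qed

lemma meet_semilattice_right_pre_reduced: "meet_semilattice E \<Longrightarrow> right_pre_reduced E"
  unfolding meet_semilattice_def right_pre_reduced_def le_r_def by blast

lemma is_meet_unique:
  assumes ms: "meet_semilattice E" and g: "is_meet E e f g" and h: "is_meet E e f h"
  shows "g = h"
proof -
  have "g \<in> E" "h \<in> E" "le_r g h" "le_r h g"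
    using g h unfolding is_meet_def by blast+
  then show ?thesis using ms unfolding meet_semilattice_def by blast
qed

lemma meet_is_meet:
  assumes ms: "meet_semilattice E" and "e \<in> E" "f \<in> E"
  shows "is_meet E e f (meet E e f)"
proof -
  obtain g where g: "is_meet E e f g"
    using ms assms(2,3) unfolding meet_semilattice_def by (elim conjE) blast
  moreover have "\<And>h. is_meet E e f h \<Longrightarrow> h = g" using is_meet_unique[OF ms _ g] .
  ultimately show ?thesis unfolding meet_def by (rule theI)
qed

lemma meet_in: "meet_semilattice E \<Longrightarrow> e \<in> E \<Longrightarrow> f \<in> E \<Longrightarrow> meet E e f \<in> E"
  using meet_is_meet unfolding is_meet_def by blast

lemma meet_self:
  assumes ms: "meet_semilattice E" and e: "e \<in> E"
  shows "meet E e e = e"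
proof (rule is_meet_unique[OF ms meet_is_meet[OF ms e e]])
  have "le_r e e" using ms e unfolding meet_semilattice_def by blast
  then show "is_meet E e e e" using e unfolding is_meet_def by blast
qed

lemma meet_fixers_iff:
  assumes ms: "meet_semilattice E" and e: "e \<in> E" and f: "f \<in> E"
    and I2: "\<forall>s. \<forall>e\<in>E. \<forall>f\<in>E. s * e = s \<and> s * f = s \<longrightarrow> s * meet E e f = s"
  shows "x * meet E e f = x \<longleftrightarrow> x * e = x \<and> x * f = x"
proof
  have "meet E e f = meet E e f * e" "meet E e f = meet E e f * f"
    using meet_is_meet[OF ms e f] unfolding is_meet_def le_r_def by auto
  then show "x * meet E e f = x \<Longrightarrow> x * e = x \<and> x * f = x"
    by (metis mult.assoc)
qed (use I2 e f in blast)

lemma dot_meet: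
  assumes law: "modal_law E dot" and ms: "meet_semilattice E" and idem: "E \<subseteq> idempotents"
    and closed: "\<forall>t. \<forall>e\<in>E. dot t e \<in> E" and e: "e \<in> E" and f: "f \<in> E"
    and I2: "\<forall>s. \<forall>e\<in>E. \<forall>f\<in>E. s * e = s \<and> s * f = s \<longrightarrow> s * meet E e f = s"
  shows "dot s (meet E e f) = meet E (dot s e) (dot s f)"
proof (rule right_pre_reduced_eqI[OF meet_semilattice_right_pre_reduced[OF ms] idem])
  have se: "dot s e \<in> E" and sf: "dot s f \<in> E" using closed e f by blast+
  show "dot s (meet E e f) \<in> E" "meet E (dot s e) (dot s f) \<in> E"
    using closed meet_in[OF ms] e f se sf by blast+
  fix x
  have "x * dot s (meet E e f) = x \<longleftrightarrow> x * s * meet E e f = x * s"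
    using modal_law_iff[OF law meet_in[OF ms e f]] by simp
  also have "\<dots> \<longleftrightarrow> x * s * e = x * s \<and> x * s * f = x * s"
    using meet_fixers_iff[OF ms e f I2] by simp
  also have "\<dots> \<longleftrightarrow> x * dot s e = x \<and> x * dot s f = x"
    using modal_law_iff[OF law e] modal_law_iff[OF law f] by simp
  also have "\<dots> \<longleftrightarrow> x * meet E (dot s e) (dot s f) = x"
    using meet_fixers_iff[OF ms se sf I2] by simp
  finally show "x * dot s (meet E e f) = x \<longleftrightarrow> x * meet E (dot s e) (dot s f) = x" .
qed

lemma meet_fixers_if_dot_meet:
  assumes law: "modal_law E dot" and ms: "meet_semilattice E" and one: "1 \<in> E"
    and M5: "\<forall>s. \<forall>e\<in>E. \<forall>f\<in>E. dot s (meet E e f) = meet E (dot s e) (dot s f)"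
  shows "\<forall>s. \<forall>e\<in>E. \<forall>f\<in>E. s * e = s \<and> s * f = s \<longrightarrow> s * meet E e f = s"
proof (intro allI ballI impI)
  fix s e f assume e: "e \<in> E" and f: "f \<in> E" and fixed: "s * e = s \<and> s * f = s"
  have "dot s e = 1" "dot s f = 1" using fixed e f dot_eq_one_iff[OF law] by blast+
  then have "dot s (meet E e f) = 1" using M5 meet_self[OF ms one] e f by simp
  then show "s * meet E e f = s" using dot_eq_one_iff[OF law meet_in[OF ms e f]] by blast
qed

theorem proposition5p4:
  fixes E :: "'a::monoid_mult set" and dot :: "'a \<Rightarrow> 'a \<Rightarrow> 'a"
  assumes "1 \<in> E" and "E \<subseteq> idempotents"
    and "\<forall>t. \<forall>e\<in>E. dot t e \<in> E"
  shows "(modal_left_monoid E dot \<longleftrightarrow>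
           right_pre_reduced E \<and>
           (\<forall>e\<in>E. dot e e = 1) \<and>
           (\<forall>s. dot s 1 = 1) \<and>
           (\<forall>e\<in>E. \<forall>s. dot s e * s = dot s e * s * e) \<and>
           (\<forall>e\<in>E. \<forall>s t. dot (s * t) e = dot s (dot t e)))
       \<and> (inductive_left_monoid E dot \<longleftrightarrow>
           (\<forall>e\<in>E. dot e e = 1) \<and>
           (\<forall>s. dot s 1 = 1) \<and>
           (\<forall>e\<in>E. \<forall>s. dot s e * s = dot s e * s * e) \<and>
           (\<forall>e\<in>E. \<forall>s t. dot (s * t) e = dot s (dot t e)) \<and>
           meet_semilattice E \<and>
           (\<forall>s. \<forall>e\<in>E. \<forall>f\<in>E. dot s (meet E e f) = meet E (dot s e) (dot s f)))"
    (is "(_ \<longleftrightarrow> _ \<and> ?M1 \<and> ?M2 \<and> ?M3 \<and> ?M4) \<and> (_ \<longleftrightarrow> _ \<and> _ \<and> _ \<and> _ \<and> _ \<and> ?M5)")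
proof -
  have M1_M4: "?M1 \<and> ?M2 \<and> ?M3 \<and> ?M4" if law: "modal_law E dot" and rpr: "right_pre_reduced E"
  proof (intro conjI ballI allI)
    fix e s t assume e: "e \<in> E"
    have "e * e = e" "dot s e * dot s e = dot s e"
      using assms(2,3) e idempotentsD by blast+
    then show "dot e e = 1" "dot s e * s = dot s e * s * e"
      using dot_self[OF law e] dot_absorb[OF law e] by blast+
    show "dot (s * t) e = dot s (dot t e)" using dot_mult[OF law rpr assms(2,3) e] .
  qed (rule dot_one[OF law assms(1)])
  have modal: "modal_left_monoid E dot \<longleftrightarrow> right_pre_reduced E \<and> ?M1 \<and> ?M2 \<and> ?M3 \<and> ?M4"
    using M1_M4 modal_law_if_M1_M4[OF assms(3)] assms
    unfolding modal_left_monoid_iff_modal_law by blast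
  moreover have "inductive_left_monoid E dot \<longleftrightarrow>
      ?M1 \<and> ?M2 \<and> ?M3 \<and> ?M4 \<and> meet_semilattice E \<and> ?M5"
  proof
    assume "inductive_left_monoid E dot"
    then have law: "modal_law E dot" and ms: "meet_semilattice E"
      and I2: "\<forall>s. \<forall>e\<in>E. \<forall>f\<in>E. s * e = s \<and> s * f = s \<longrightarrow> s * meet E e f = s"
      and "?M1 \<and> ?M2 \<and> ?M3 \<and> ?M4"
      using modal unfolding inductive_left_monoid_def modal_left_monoid_iff_modal_law by blast+
    moreover have ?M5 using dot_meet[OF law ms assms(2,3) _ _ I2] by blast
    ultimately show "?M1 \<and> ?M2 \<and> ?M3 \<and> ?M4 \<and> meet_semilattice E \<and> ?M5" by blast
  next
    assume M: "?M1 \<and> ?M2 \<and> ?M3 \<and> ?M4 \<and> meet_semilattice E \<and> ?M5"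
    then have ms: "meet_semilattice E" and M5: ?M5 by blast+
    then have "modal_left_monoid E dot"
      using modal M meet_semilattice_right_pre_reduced by blast
    then show "inductive_left_monoid E dot"
      unfolding inductive_left_monoid_def
      using ms meet_fixers_if_dot_meet[OF _ ms assms(1) M5] modal_left_monoid_iff_modal_law by blast
  qed
  ultimately show ?thesis by blast
qed

end
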